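(* Let $K$ be a field, $n\ge1$, $\vartheta$ any one of the four types (left, right, pre-two-sided, two-sided), and $H=\{A\in M_n(K):\operatorname{Tr}A=0\}$. (i) If $\operatorname{char}K=0$ or $\operatorname{char}K=p>n$, then $H$ is a $\vartheta$-Mathieu subspace of $M_n(K)$ and it is the only $\vartheta$-Mathieu subspace of $M_n(K)$ of codimension one. (ii) If $\operatorname{char}K=p>0$ with $p\le n$, then $M_n(K)$ has no $\vartheta$-Mathieu subspace of codimension one.
   Context: $M_n(K)$ is the algebra of $n\times n$ matrices over $K$. A $K$-subspace $V$ of an algebra $\mathcal A$ is a left (resp. right) Mathieu subspace if whenever $a^m\in V$ for all $m\ge1$, then for every $b\in\mathcal A$, $ba^m\in V$ (resp. $a^mb\in V$) for all sufficiently large $m$; pre-two-sided if both left and right; two-sided if whenever $a^m\in V$ for all $m\ge1$, for all $b,c\in\mathcal A$, $ba^mc\in V$ for all sufficiently large $m$. *)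

theory Defs
  imports "HOL-Analysis.Analysis"
begin

text \<open>Matrices in M_n(K) are rendered as 'a^'n^'n with 'a a field and 'n a finite type,
  n = CARD('n) (so n >= 1 automatically). Matrix product is (**), identity is mat 1,
  trace is the library's trace.\<close>

definition mat_scale :: "'a::field \<Rightarrow> 'a^'n^'n \<Rightarrow> 'a^'n^'n" where
  "mat_scale c A = (\<chi> i j. c * A$i$j)"

lemma mat_scale_vector_space: "vector_space (mat_scale :: 'a::field \<Rightarrow> 'a^'n^'n \<Rightarrow> 'a^'n^'n)"
  by unfold_locales (simp_all add: mat_scale_def vec_eq_iff algebra_simps)

text \<open>Matrix powers with respect to matrix multiplication (not the componentwise power).\<close>
primrec mat_pow :: "'a::semiring_1^'n^'n \<Rightarrow> nat \<Rightarrow> 'a^'n^'n" where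
  "mat_pow A 0 = mat 1"
| "mat_pow A (Suc m) = A ** mat_pow A m"

definition ksubspace :: "('a::field^'n^'n) set \<Rightarrow> bool" where
  "ksubspace V = module.subspace mat_scale V"

definition codim_one :: "('a::field^'n^'n) set \<Rightarrow> bool" where
  "codim_one V \<longleftrightarrow> ksubspace V \<and>
     vector_space.dim mat_scale V + 1 = vector_space.dim mat_scale (UNIV :: ('a^'n^'n) set)"

datatype mathieu_type = LeftMS | RightMS | PreTwoSidedMS | TwoSidedMS

definition left_mathieu :: "('a::field^'n^'n) set \<Rightarrow> bool" where
  "left_mathieu V \<longleftrightarrow> ksubspace V \<and>
     (\<forall>a. (\<forall>m\<ge>1. mat_pow a m \<in> V) \<longrightarrow> (\<forall>b. \<exists>N. \<forall>m\<ge>N. b ** mat_pow a m \<in> V))"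

definition right_mathieu :: "('a::field^'n^'n) set \<Rightarrow> bool" where
  "right_mathieu V \<longleftrightarrow> ksubspace V \<and>
     (\<forall>a. (\<forall>m\<ge>1. mat_pow a m \<in> V) \<longrightarrow> (\<forall>b. \<exists>N. \<forall>m\<ge>N. mat_pow a m ** b \<in> V))"

definition two_sided_mathieu :: "('a::field^'n^'n) set \<Rightarrow> bool" where
  "two_sided_mathieu V \<longleftrightarrow> ksubspace V \<and>
     (\<forall>a. (\<forall>m\<ge>1. mat_pow a m \<in> V) \<longrightarrow> (\<forall>b c. \<exists>N. \<forall>m\<ge>N. b ** mat_pow a m ** c \<in> V))"

fun is_mathieu :: "mathieu_type \<Rightarrow> ('a::field^'n^'n) set \<Rightarrow> bool" where
  "is_mathieu LeftMS V = left_mathieu V"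
| "is_mathieu RightMS V = right_mathieu V"
| "is_mathieu PreTwoSidedMS V = (left_mathieu V \<and> right_mathieu V)"
| "is_mathieu TwoSidedMS V = two_sided_mathieu V"

end

theory Submission
  imports Defs
begin

text \<open>
  A subspace of codimension one is the kernel of a nonzero linear form \<phi>. Idempotents are
  their own powers, so if this kernel is a left Mathieu subspace, then \<phi> e = 0 implies
  \<phi> (b e) = 0 for every idempotent e and every b; right Mathieu subspaces reduce to this
  by transposition. Testing the property on suitable idempotents in the span of the matrix
  units e_ii, e_ij, e_ji, e_jj shows that \<phi> vanishes off the diagonal and is constant on
  it, so \<phi> = c tr with c \<noteq> 0. If 0 < p = char K \<le> n, the idempotent
  diag(1, ..., 1, 0, ..., 0) with p ones has trace zero, yet e_11 times it is e_11, so no such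
  subspace exists.
  Otherwise the trace of an idempotent is its rank, so idempotents of trace zero vanish.
  Fitting's argument then shows that a matrix A all of whose powers have trace zero is
  nilpotent: A^r = A^(r+1) T for some r \<ge> 1 and some T in the span of the powers of A,
  and A^r T^r is an idempotent of trace zero absorbing A^r.
\<close>

section \<open>Matrix units and matrix powers\<close>

lemma matrix_add_rdistrib: "((A::'a::semiring_1^'n^'m) + B) ** C = A ** C + B ** C"
  by (simp add: vec_eq_iff matrix_matrix_mult_def distrib_right sum.distrib)

lemma matrix_diff_ldistrib: "(A::'a::ring_1^'n^'m) ** (B - C) = A ** B - A ** C"
  by (simp add: vec_eq_iff matrix_matrix_mult_def right_diff_distrib sum_subtractf)

lemma matrix_diff_rdistrib: "((A::'a::ring_1^'n^'m) - B) ** C = A ** C - B ** C"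
  by (simp add: vec_eq_iff matrix_matrix_mult_def left_diff_distrib sum_subtractf)

lemma mat_scale_nth [simp]: "mat_scale c A $ i $ j = c * A $ i $ j"
  by (simp add: mat_scale_def)

lemma mat_scale_1 [simp]: "mat_scale 1 A = A"
  by (simp_all add: vec_eq_iff)

lemma matrix_mul_mat_scale_left: "mat_scale c A ** B = mat_scale c (A ** B)"
  by (simp add: vec_eq_iff matrix_matrix_mult_def sum_distrib_left mult.assoc)

lemma matrix_mul_mat_scale_right: "A ** mat_scale c B = mat_scale c (A ** B)"
  by (simp add: vec_eq_iff matrix_matrix_mult_def sum_distrib_left algebra_simps)

lemma trace_mat_scale: "trace (mat_scale c A) = c * trace A"
  by (simp add: trace_def sum_distrib_left)

lemma trace_transpose: "trace (transpose A) = trace A"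
  by (simp add: trace_def transpose_def)

lemma transpose_add: "transpose (A + B) = transpose A + transpose B"
  by (simp add: transpose_def vec_eq_iff)

lemma transpose_mat_scale: "transpose (mat_scale c A) = mat_scale c (transpose A)"
  by (simp add: transpose_def vec_eq_iff)

definition matrix_unit :: "'m \<Rightarrow> 'n \<Rightarrow> 'a::zero_neq_one^'n^'m" where
  "matrix_unit i j = (\<chi> a b. if a = i \<and> b = j then 1 else 0)"

lemma matrix_unit_nth [simp]: "matrix_unit i j $ a $ b = (if a = i \<and> b = j then 1 else 0)"
  by (simp add: matrix_unit_def)

lemma matrix_unit_mult:
  "(matrix_unit i j ** matrix_unit k l :: 'a::semiring_1^_^_) =
    (if j = k then matrix_unit i l else 0)"
proof -
  have "(matrix_unit i j ** matrix_unit k l :: 'a^_^_) $ a $ b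
      = (\<Sum>x\<in>UNIV. if x = j then (if a = i \<and> j = k \<and> b = l then 1 else 0) else 0)" for a b
    unfolding matrix_matrix_mult_def vec_lambda_beta by (rule sum.cong) auto
  then show ?thesis by (auto simp: vec_eq_iff)
qed

lemma trace_matrix_unit:
  "trace (matrix_unit i j :: 'a::semiring_1^'n^'n) = (if i = j then 1 else 0)"
  by (cases "i = j") (auto simp: trace_def intro!: sum.neutral)

lemma matrix_sum_matrix_units:
  "X = (\<Sum>(i, j)\<in>UNIV. mat_scale (X $ i $ j) (matrix_unit i j))"
proof -
  have "(\<Sum>(i, j)\<in>UNIV. mat_scale (X $ i $ j) (matrix_unit i j)) $ a $ b = X $ a $ b" for a b
  proof -
    have "(\<Sum>(i, j)\<in>UNIV. mat_scale (X $ i $ j) (matrix_unit i j)) $ a $ b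
        = (\<Sum>p\<in>UNIV. if p = (a, b) then X $ a $ b else 0)"
      by (simp add: case_prod_unfold prod_eq_iff if_distrib[of "\<lambda>x. _ * x"] cong: if_cong,
          rule sum.cong, auto)
    then show ?thesis by simp
  qed
  then show ?thesis by (simp add: vec_eq_iff)
qed

lemmas matrix_ring_simps = matrix_add_ldistrib matrix_add_rdistrib matrix_diff_ldistrib
  matrix_diff_rdistrib matrix_mul_mat_scale_left matrix_mul_mat_scale_right matrix_unit_mult

lemma mat_pow_add: "mat_pow A (k + l) = mat_pow A k ** mat_pow A l"
  by (induction k) (simp_all add: matrix_mul_assoc)

lemma mat_pow_commute: "mat_pow A k ** mat_pow A l = mat_pow A l ** mat_pow A k"
  by (metis mat_pow_add add.commute)

lemma mat_pow_idempotent: "e ** e = e \<Longrightarrow> 0 < m \<Longrightarrow> mat_pow e m = e"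
proof (induction m)
  case (Suc m) then show ?case by (cases m) auto
qed simp

lemma mat_pow_zero_mono: "mat_pow A k = 0 \<Longrightarrow> k \<le> m \<Longrightarrow> mat_pow A m = 0"
  by (metis le_add_diff_inverse mat_pow_add times0_left)

section \<open>Linear forms and subspaces of codimension one\<close>

interpretation Mat: vector_space "mat_scale :: 'a::field \<Rightarrow> 'a^'n^'n \<Rightarrow> 'a^'n^'n"
  by (rule mat_scale_vector_space)

lemma matrix_units_independent:
  "Mat.independent (range (case_prod matrix_unit) :: ('a::field^'n^'n) set)"
proof (rule Mat.independent_if_scalars_zero)
  fix c :: "'a^'n^'n \<Rightarrow> 'a" and w :: "'a^'n^'n"
  assume w: "w \<in> range (case_prod matrix_unit)"
    and zero: "(\<Sum>v\<in>range (case_prod matrix_unit). mat_scale (c v) v) = 0"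
  obtain i j where wij: "w = matrix_unit i j" using w by auto
  have inj: "inj (case_prod matrix_unit :: _ \<Rightarrow> 'a^'n^'n)"
  proof (rule injI)
    fix p q :: "'n \<times> 'n"
    assume "(case_prod matrix_unit p :: 'a^'n^'n) = case_prod matrix_unit q"
    then have "(case_prod matrix_unit p :: 'a^'n^'n) $ fst p $ snd p =
        case_prod matrix_unit q $ fst p $ snd p"
      by simp
    then show "p = q" by (auto simp: case_prod_unfold prod_eq_iff split: if_splits)
  qed
  have "0 = (\<Sum>p\<in>UNIV. mat_scale (c (case_prod matrix_unit p)) (case_prod matrix_unit p)) $ i $ j"
    using zero by (simp add: sum.reindex[OF inj])
  also have "\<dots> = (\<Sum>p\<in>UNIV. if p = (i, j) then c w else 0)"
    by (simp add: wij case_prod_unfold prod_eq_iff if_distrib[of "\<lambda>x. _ * x"] cong: if_cong,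
        rule sum.cong, auto)
  finally show "c w = 0" by simp
qed simp

lemma matrix_units_span:
  "Mat.span (range (case_prod matrix_unit)) = (UNIV :: ('a::field^'n^'n) set)"
proof -
  have "X \<in> Mat.span (range (case_prod matrix_unit))" for X :: "'a^'n^'n"
    by (subst matrix_sum_matrix_units, unfold case_prod_unfold)
      (intro Mat.span_sum Mat.span_scale Mat.span_base, auto)
  then show ?thesis by auto
qed

interpretation Mat: finite_dimensional_vector_space
  "mat_scale :: 'a::field \<Rightarrow> 'a^'n^'n \<Rightarrow> 'a^'n^'n" "range (case_prod matrix_unit)"
  by unfold_locales (simp_all add: matrix_units_independent matrix_units_span)

abbreviation linear_form :: "('a::field^'n^'n \<Rightarrow> 'a) \<Rightarrow> bool" where
  "linear_form \<equiv> Vector_Spaces.linear mat_scale (*)"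

lemma linear_form_iff:
  "linear_form \<phi> \<longleftrightarrow> (\<forall>X Y. \<phi> (X + Y) = \<phi> X + \<phi> Y) \<and> (\<forall>c X. \<phi> (mat_scale c X) = c * \<phi> X)"
  by (simp add: Vector_Spaces.linear_iff mat_scale_vector_space
      vector_space_over_itself.vector_space_axioms)

lemma linear_form_hom: "linear_form \<phi> \<Longrightarrow> module_hom mat_scale (*) \<phi>"
  by (simp add: Vector_Spaces.linear_def)

lemmas linear_form_add = module_hom.add[OF linear_form_hom]
  and linear_form_scale = module_hom.scale[OF linear_form_hom]

lemma linear_form_transpose: "linear_form \<phi> \<Longrightarrow> linear_form (\<lambda>X. \<phi> (transpose X))"
  by (simp add: linear_form_iff transpose_add transpose_mat_scale)

lemma linear_form_trace: "linear_form trace"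
  by (simp add: linear_form_iff trace_add trace_mat_scale)

lemma linear_form_eqI:
  fixes \<phi> \<psi> :: "'a::field^'n^'n \<Rightarrow> 'a"
  assumes "linear_form \<phi>" "linear_form \<psi>"
    and "\<And>i j. \<phi> (matrix_unit i j) = \<psi> (matrix_unit i j)"
  shows "\<phi> = \<psi>"
proof
  fix X
  have pair: "vector_space_pair (mat_scale :: 'a \<Rightarrow> 'a^'n^'n \<Rightarrow> _) (*)"
    by (simp add: vector_space_pair_def mat_scale_vector_space
        vector_space_over_itself.vector_space_axioms)
  have "\<phi> X = \<psi> X" if "X \<in> Mat.span (range (case_prod matrix_unit))"
    using that by (rule vector_space_pair.linear_eq_on[OF pair assms(1,2)]) (auto simp: assms(3))
  then show "\<phi> X = \<psi> X" by (simp add: matrix_units_span)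
qed

lemma linear_form_scaled_trace: "linear_form (\<lambda>X. c * trace X)"
  by (simp add: linear_form_iff trace_add trace_mat_scale algebra_simps)

lemma codim_one_iff_spanning_complement:
  fixes V :: "('a::field^'n^'n) set"
  shows "codim_one V \<longleftrightarrow> Mat.subspace V \<and> (\<exists>x. x \<notin> V \<and> Mat.span (insert x V) = UNIV)"
proof -
  have dim_insert: "Mat.dim (insert x V) = Mat.dim V + 1" if "Mat.subspace V" "x \<notin> V" for x
    using that by (metis Mat.dim_insert Mat.span_eq_iff)
  have full: "Mat.dim S = Mat.dim (UNIV :: ('a^'n^'n) set) \<longleftrightarrow> Mat.span S = UNIV"
    for S :: "('a^'n^'n) set"
    by (simp add: Mat.dim_UNIV Mat.dim_eq_full[unfolded Mat.dimension_def])
  show ?thesis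
  proof
    assume "codim_one V"
    then have sub: "Mat.subspace V" and dim: "Mat.dim V + 1 = Mat.dim (UNIV :: ('a^'n^'n) set)"
      by (simp_all add: codim_one_def ksubspace_def)
    then obtain x where "x \<notin> V" by (metis UNIV_I n_not_Suc_n subsetI subset_antisym Suc_eq_plus1)
    with sub dim show "Mat.subspace V \<and> (\<exists>x. x \<notin> V \<and> Mat.span (insert x V) = UNIV)"
      using dim_insert full by metis
  next
    assume "Mat.subspace V \<and> (\<exists>x. x \<notin> V \<and> Mat.span (insert x V) = UNIV)"
    then obtain x where sub: "Mat.subspace V" "x \<notin> V" "Mat.span (insert x V) = UNIV"
      by blast
    then have "Mat.dim V + 1 = Mat.dim (UNIV :: ('a^'n^'n) set)"
      using dim_insert full by metis
    with sub show "codim_one V" by (simp add: codim_one_def ksubspace_def)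
  qed
qed

lemma subspace_coset_coefficient_unique:
  assumes "Mat.subspace V" and "x \<notin> V"
    and "Y - mat_scale c x \<in> V" and "Y - mat_scale d x \<in> V"
  shows "c = d"
proof (rule ccontr)
  assume "c \<noteq> d"
  have "mat_scale (d - c) x = (Y - mat_scale c x) - (Y - mat_scale d x)"
    by (simp add: vec_eq_iff algebra_simps)
  also have "\<dots> \<in> V" using Mat.subspace_diff[OF assms(1,3,4)] .
  finally have "mat_scale (inverse (d - c)) (mat_scale (d - c) x) \<in> V"
    using assms(1) by (rule Mat.subspace_scale[rotated])
  with \<open>c \<noteq> d\<close> have "x \<in> V" by (simp add: vec_eq_iff mult.assoc[symmetric])
  with assms(2) show False ..
qed

lemma spanning_complement_kernel:
  fixes V :: "('a::field^'n^'n) set"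
  assumes sub: "Mat.subspace V" and x: "x \<notin> V" and spans: "Mat.span (insert x V) = UNIV"
  obtains \<phi> where "linear_form \<phi>" "\<phi> x \<noteq> 0" "V = {X. \<phi> X = 0}"
proof -
  have "\<exists>c. Y - mat_scale c x \<in> V" for Y
    using spans sub by (auto simp: Mat.span_insert Mat.span_eq_iff[THEN iffD2] set_eq_iff)
  then obtain \<phi> where \<phi>: "\<And>Y. Y - mat_scale (\<phi> Y) x \<in> V" by metis
  note unique = subspace_coset_coefficient_unique[OF sub x]
  have "linear_form \<phi>"
    unfolding linear_form_iff
  proof (intro conjI allI)
    fix X Y
    have "(X + Y) - mat_scale (\<phi> X + \<phi> Y) x = (X - mat_scale (\<phi> X) x) + (Y - mat_scale (\<phi> Y) x)"
      by (simp add: vec_eq_iff algebra_simps)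
    also have "\<dots> \<in> V" using \<phi> sub by (simp add: Mat.subspace_add)
    finally show "\<phi> (X + Y) = \<phi> X + \<phi> Y" using unique \<phi> by metis
  next
    fix c X
    have "mat_scale c X - mat_scale (c * \<phi> X) x = mat_scale c (X - mat_scale (\<phi> X) x)"
      by (simp add: vec_eq_iff algebra_simps)
    also have "\<dots> \<in> V" using \<phi> sub by (simp add: Mat.subspace_scale)
    finally show "\<phi> (mat_scale c X) = c * \<phi> X" using unique \<phi> by metis
  qed
  moreover have kernel: "V = {X. \<phi> X = 0}"
  proof (rule set_eqI, unfold mem_Collect_eq, rule iffI)
    fix X assume "X \<in> V"
    then show "\<phi> X = 0" using unique[OF _ \<phi>[of X], of 0] by simp
  next
    fix X assume "\<phi> X = 0"
    then show "X \<in> V" using \<phi>[of X] by simp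
  qed
  moreover have "\<phi> x \<noteq> 0" using x kernel by auto
  ultimately show thesis using that by blast
qed

lemma codim_one_iff_kernel:
  fixes V :: "('a::field^'n^'n) set"
  shows "codim_one V \<longleftrightarrow> (\<exists>\<phi>. linear_form \<phi> \<and> (\<exists>X. \<phi> X \<noteq> 0) \<and> V = {X. \<phi> X = 0})"
proof
  assume "codim_one V"
  then obtain x where "Mat.subspace V" "x \<notin> V" "Mat.span (insert x V) = UNIV"
    by (auto simp: codim_one_iff_spanning_complement)
  then show "\<exists>\<phi>. linear_form \<phi> \<and> (\<exists>X. \<phi> X \<noteq> 0) \<and> V = {X. \<phi> X = 0}"
    by (blast elim: spanning_complement_kernel)
next
  assume "\<exists>\<phi>. linear_form \<phi> \<and> (\<exists>X. \<phi> X \<noteq> 0) \<and> V = {X. \<phi> X = 0}"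
  then obtain \<phi> x where lin: "linear_form \<phi>" and x: "\<phi> x \<noteq> 0" and V: "V = {X. \<phi> X = 0}"
    by blast
  have sub: "Mat.subspace V"
    unfolding V using linear_form_hom[OF lin] by (rule module_hom.subspace_kernel)
  have "Y - mat_scale (\<phi> Y / \<phi> x) x \<in> V" for Y
    using x by (simp add: V module_hom.diff[OF linear_form_hom[OF lin]] linear_form_scale[OF lin])
  then have "Mat.span (insert x V) = UNIV"
    using sub by (auto simp: Mat.span_insert Mat.span_eq_iff[THEN iffD2])
  with sub x V show "codim_one V"
    by (auto simp: codim_one_iff_spanning_complement)
qed

section \<open>Linear forms whose kernel absorbs the left ideals of its idempotents\<close>

definition kernel_left_ideal_closed :: "('a::field^'n^'n \<Rightarrow> 'a) \<Rightarrow> bool" where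
  "kernel_left_ideal_closed \<phi> \<longleftrightarrow> (\<forall>e b. e ** e = e \<longrightarrow> \<phi> e = 0 \<longrightarrow> \<phi> (b ** e) = 0)"

context
  fixes \<phi> :: "'a::field^'n^'n \<Rightarrow> 'a"
  assumes lin: "linear_form \<phi>" and closed: "kernel_left_ideal_closed \<phi>"
begin

private lemma closedD: "e ** e = e \<Longrightarrow> \<phi> e = 0 \<Longrightarrow> \<phi> (b ** e) = 0"
  using closed by (simp add: kernel_left_ideal_closed_def)

lemma kernel_left_ideal_closed_off_diagonal:
  assumes "i \<noteq> j"
  shows "\<phi> (matrix_unit i j) = 0"
proof (rule ccontr)
  assume nz: "\<phi> (matrix_unit i j) \<noteq> 0"
  define t where "t = - \<phi> (matrix_unit j j) / \<phi> (matrix_unit i j)"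
  define e :: "'a^'n^'n" where "e = matrix_unit j j + mat_scale t (matrix_unit i j)"
  have "e ** e = e" and "matrix_unit i j ** e = matrix_unit i j"
    using assms by (simp_all add: e_def matrix_ring_simps)
  moreover have "\<phi> e = \<phi> (matrix_unit j j) + t * \<phi> (matrix_unit i j)"
    by (simp add: e_def linear_form_add[OF lin] linear_form_scale[OF lin])
  then have "\<phi> e = 0" using nz by (simp add: t_def)
  ultimately show False using closedD nz by metis
qed

lemma kernel_left_ideal_closed_diagonal_zero:
  assumes "i \<noteq> j" and "\<phi> (matrix_unit i i) = 0"
  shows "\<phi> (matrix_unit j j) = 0"
proof -
  define e :: "'a^'n^'n" where "e = matrix_unit i i + matrix_unit i j"
  have "e ** e = e" using assms by (simp add: e_def matrix_ring_simps)
  moreover have "\<phi> e = 0"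
    using assms kernel_left_ideal_closed_off_diagonal by (simp add: e_def linear_form_add[OF lin])
  moreover have "matrix_unit j i ** e = matrix_unit j i + matrix_unit j j"
    using assms by (simp add: e_def matrix_ring_simps)
  ultimately show ?thesis
    using closedD kernel_left_ideal_closed_off_diagonal \<open>i \<noteq> j\<close>
    by (metis add_0 linear_form_add[OF lin])
qed

lemma kernel_left_ideal_closed_diagonal_eq:
  assumes "i \<noteq> j"
  shows "\<phi> (matrix_unit i i) = \<phi> (matrix_unit j j)"
proof (rule ccontr)
  define a b where "a = \<phi> (matrix_unit i i)" and "b = \<phi> (matrix_unit j j)"
  assume "\<phi> (matrix_unit i i) \<noteq> \<phi> (matrix_unit j j)"
  then have "a \<noteq> b" by (simp add: a_def b_def)
  then have "a \<noteq> 0" "b \<noteq> 0"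
    using kernel_left_ideal_closed_diagonal_zero[OF assms]
      kernel_left_ideal_closed_diagonal_zero[OF assms[symmetric]]
    by (auto simp: a_def b_def)
  (* P ** Q = Q and Q ** P = P make every affine combination of P and Q idempotent;
     \<alpha> is chosen so that \<phi> vanishes on it. *)
  define \<alpha> where "\<alpha> = b / (b - a)"
  define P Q :: "'a^'n^'n"
    where "P = matrix_unit i i + matrix_unit j i" and "Q = matrix_unit i j + matrix_unit j j"
  define e where "e = mat_scale \<alpha> P + mat_scale (1 - \<alpha>) Q"
  have "P ** P = P" "P ** Q = Q" "Q ** P = P" "Q ** Q = Q"
    using assms by (simp_all add: P_def Q_def matrix_ring_simps)
  then have "P ** e = e" and "Q ** e = e"
    by (simp_all add: e_def matrix_ring_simps)
  moreover have "e ** e = mat_scale \<alpha> (P ** e) + mat_scale (1 - \<alpha>) (Q ** e)"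
    by (subst (1) e_def) (simp only: matrix_add_rdistrib matrix_mul_mat_scale_left)
  ultimately have "e ** e = mat_scale (\<alpha> + (1 - \<alpha>)) e"
    by (simp only: Mat.scale_left_distrib)
  then have idem: "e ** e = e" by simp
  have "\<phi> e = \<alpha> * a + (1 - \<alpha>) * b"
    using kernel_left_ideal_closed_off_diagonal assms
    by (simp add: e_def P_def Q_def a_def b_def linear_form_add[OF lin] linear_form_scale[OF lin])
  then have kernel: "\<phi> e = 0"
    using \<open>a \<noteq> b\<close> by (simp add: \<alpha>_def field_simps)
  have "matrix_unit i i ** e = mat_scale \<alpha> (matrix_unit i i) + mat_scale (1 - \<alpha>) (matrix_unit i j)"
    using assms by (simp add: e_def P_def Q_def matrix_ring_simps)
  then have "\<phi> (matrix_unit i i ** e) = \<alpha> * a"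
    using kernel_left_ideal_closed_off_diagonal assms
    by (simp add: a_def linear_form_add[OF lin] linear_form_scale[OF lin])
  moreover have "\<alpha> * a \<noteq> 0"
    using \<open>a \<noteq> b\<close> \<open>a \<noteq> 0\<close> \<open>b \<noteq> 0\<close> by (simp add: \<alpha>_def)
  ultimately show False using closedD[OF idem kernel] by metis
qed

lemma kernel_left_ideal_closed_scaled_trace: "\<phi> = (\<lambda>X. \<phi> (matrix_unit k k) * trace X)"
proof (rule linear_form_eqI[OF lin linear_form_scaled_trace])
  fix i j :: 'n
  show "\<phi> (matrix_unit i j) = \<phi> (matrix_unit k k) * trace (matrix_unit i j)"
    using kernel_left_ideal_closed_off_diagonal kernel_left_ideal_closed_diagonal_eq
    by (cases "i = j"; cases "i = k") (auto simp: trace_matrix_unit)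
qed

end

lemma trace_kernel_not_left_ideal_closed:
  assumes "0 < CHAR('a)" and "CHAR('a) \<le> CARD('n)"
  shows "\<not> kernel_left_ideal_closed (trace :: 'a::field^'n^'n \<Rightarrow> 'a)"
proof
  assume closed: "kernel_left_ideal_closed (trace :: 'a^'n^'n \<Rightarrow> 'a)"
  obtain S :: "'n set" where S: "card S = CHAR('a)"
    using assms(2) by (meson obtain_subset_with_card_n)
  then obtain k where "k \<in> S" using assms(1) by fastforce
  define e :: "'a^'n^'n" where "e = (\<chi> x y. if x = y \<and> x \<in> S then 1 else 0)"
  have idem: "e ** e = e"
  proof -
    have "(e ** e) $ x $ y = (\<Sum>z\<in>UNIV. if z = x then e $ x $ y else 0)" for x y
      unfolding matrix_matrix_mult_def vec_lambda_beta by (rule sum.cong) (auto simp: e_def)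
    then show ?thesis by (simp add: vec_eq_iff)
  qed
  have kernel: "trace e = 0"
    using S by (simp add: trace_def e_def sum.If_cases)
  have "matrix_unit k k ** e = matrix_unit k k"
  proof -
    have "(matrix_unit k k ** e) $ x $ y =
        (\<Sum>z\<in>UNIV. if z = k then matrix_unit k k $ x $ y else 0)" for x y
      unfolding matrix_matrix_mult_def vec_lambda_beta
      by (rule sum.cong) (use \<open>k \<in> S\<close> in \<open>auto simp: e_def\<close>)
    then show ?thesis by (simp add: vec_eq_iff)
  qed
  then show False
    using closed idem kernel unfolding kernel_left_ideal_closed_def
    by (metis trace_matrix_unit one_neq_zero)
qed

section \<open>Trace and rank of idempotents\<close>

lemma nonzero_idempotent_eigenpair:
  fixes E :: "'a::field^'n^'n"
  assumes idem: "E ** E = E" and "E \<noteq> 0"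
  obtains u w :: "'a^'n" where "E *v u = u" "w v* E = w" "(\<Sum>l\<in>UNIV. w $ l * u $ l) = 1"
proof -
  obtain k j where kj: "E $ k $ j \<noteq> 0" using \<open>E \<noteq> 0\<close> by (auto simp: vec_eq_iff)
  have EE: "(\<Sum>l\<in>UNIV. E $ a $ l * E $ l $ b) = E $ a $ b" for a b
    using idem by (simp add: vec_eq_iff matrix_matrix_mult_def)
  define u where "u = (\<chi> i. E $ i $ j)"
  define w where "w = (\<chi> l. E $ k $ l / E $ k $ j)"
  have "E *v u = u" by (simp add: vec_eq_iff matrix_vector_mult_def u_def EE)
  moreover have "w v* E = w"
    by (simp add: vec_eq_iff vector_matrix_mult_def w_def EE flip: sum_divide_distrib)
  moreover have "(\<Sum>l\<in>UNIV. w $ l * u $ l) = 1"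
    using kj by (simp add: w_def u_def EE flip: sum_divide_distrib)
  ultimately show thesis ..
qed

definition outer_product :: "'a::times^'m \<Rightarrow> 'a^'n \<Rightarrow> 'a^'n^'m" where
  "outer_product u w = (\<chi> i j. u $ i * w $ j)"

lemma outer_product_mult_vector:
  "outer_product u w *v z = (\<Sum>j\<in>UNIV. w $ j * z $ j) *s (u :: 'a::comm_semiring_1^'m)"
  by (simp add: vec_eq_iff matrix_vector_mult_def outer_product_def sum_distrib_left mult_ac)

lemma trace_outer_product:
  "trace (outer_product u w :: 'a::comm_semiring_1^'n^'n) = (\<Sum>l\<in>UNIV. w $ l * u $ l)"
  by (simp add: trace_def outer_product_def mult.commute)

context
  fixes E :: "'a::field^'n^'n" and u w :: "'a^'n"
  assumes idem: "E ** E = E" and Eu: "E *v u = u" and wE: "w v* E = w"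
    and wu: "(\<Sum>l\<in>UNIV. w $ l * u $ l) = 1"
begin

private lemma outer_product_absorbed:
  "outer_product u w ** outer_product u w = outer_product u w"
  "E ** outer_product u w = outer_product u w" "outer_product u w ** E = outer_product u w"
proof -
  have "(\<Sum>l\<in>UNIV. u $ i * w $ l * (u $ l * w $ m)) = u $ i * w $ m * (\<Sum>l\<in>UNIV. w $ l * u $ l)"
    for i m by (simp add: sum_distrib_left mult_ac)
  then show "outer_product u w ** outer_product u w = outer_product u w"
    using wu by (simp add: vec_eq_iff matrix_matrix_mult_def outer_product_def)
  have "(\<Sum>l\<in>UNIV. E $ i $ l * (u $ l * w $ m)) = (E *v u) $ i * w $ m" for i m
    by (simp add: matrix_vector_mult_def sum_distrib_right mult.assoc)
  then show "E ** outer_product u w = outer_product u w"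
    using Eu by (simp add: vec_eq_iff matrix_matrix_mult_def outer_product_def)
  have "(\<Sum>l\<in>UNIV. u $ i * w $ l * E $ l $ m) = u $ i * (w v* E) $ m" for i m
    by (simp add: vector_matrix_mult_def sum_distrib_left mult.assoc)
  then show "outer_product u w ** E = outer_product u w"
    using wE by (simp add: vec_eq_iff matrix_matrix_mult_def outer_product_def)
qed

lemma idempotent_minus_outer_product:
  "(E - outer_product u w) ** (E - outer_product u w) = E - outer_product u w"
  using idem outer_product_absorbed by (simp add: matrix_ring_simps)

lemma trace_minus_outer_product: "trace E = trace (E - outer_product u w) + 1"
  using wu by (simp add: trace_sub trace_outer_product)

lemma rank_minus_outer_product:
  "vec.dim (range ((*v) E)) = vec.dim (range ((*v) (E - outer_product u w))) + 1"
proof -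
  let ?G = "E - outer_product u w" and ?c = "\<lambda>z. \<Sum>j\<in>UNIV. w $ j * z $ j"
  have G_split: "?G *v z = E *v z - ?c z *s u" for z
    by (simp add: matrix_vector_mult_diff_rdistrib outer_product_mult_vector)
  have "u \<noteq> 0" using wu by auto
  have "?G *v u = 0" using Eu wu by (simp add: G_split mult.commute)
  have "u \<notin> range ((*v) ?G)"
  proof
    assume "u \<in> range ((*v) ?G)"
    then obtain z where "u = ?G *v z" by blast
    then have "?G *v u = u"
      by (metis idempotent_minus_outer_product matrix_vector_mul_assoc)
    with \<open>?G *v u = 0\<close> \<open>u \<noteq> 0\<close> show False by simp
  qed
  then have "u \<notin> vec.span (range ((*v) ?G))"
    by (simp add: vec.span_eq_iff[THEN iffD2] vec.subspace_image)
  moreover have "range ((*v) E) = vec.span (insert u (range ((*v) ?G)))"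
  proof
    show "range ((*v) E) \<subseteq> vec.span (insert u (range ((*v) ?G)))"
    proof
      fix y assume "y \<in> range ((*v) E)"
      then obtain z where "y = ?G *v z + ?c z *s u" by (auto simp: G_split)
      then show "y \<in> vec.span (insert u (range ((*v) ?G)))"
        by (simp add: vec.span_add vec.span_scale vec.span_base)
    qed
    have "?G *v z = E *v (z - ?c z *s u)" for z
      using Eu by (simp add: G_split matrix_vector_mult_diff_distrib vector_scalar_commute)
    then have "range ((*v) ?G) \<subseteq> range ((*v) E)" by auto
    moreover have "u \<in> range ((*v) E)" using Eu by (metis rangeI)
    ultimately have "insert u (range ((*v) ?G)) \<subseteq> range ((*v) E)" by blast
    then show "vec.span (insert u (range ((*v) ?G))) \<subseteq> range ((*v) E)"
      by (simp add: vec.span_minimal vec.subspace_image)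
  qed
  ultimately show ?thesis by (simp add: vec.dim_insert)
qed

end

lemma idempotent_trace_eq_rank:
  fixes E :: "'a::field^'n^'n"
  assumes "E ** E = E"
  shows "trace E = of_nat (vec.dim (range ((*v) E)))"
  using assms
proof (induction "vec.dim (range ((*v) E))" arbitrary: E)
  case 0
  then have "E = 0" by (simp add: matrix_eq image_subset_iff)
  then show ?case by (simp add: trace_def)
next
  case (Suc d)
  then have "E \<noteq> 0" by fastforce
  then obtain u w where uw: "E *v u = u" "w v* E = w" "(\<Sum>l\<in>UNIV. w $ l * u $ l) = 1"
    using nonzero_idempotent_eigenpair Suc.prems by blast
  then show ?case
    using Suc.hyps idempotent_minus_outer_product[OF Suc.prems uw]
      trace_minus_outer_product[OF Suc.prems uw] rank_minus_outer_product[OF Suc.prems uw]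
    by simp
qed

lemma idempotent_trace_zero:
  fixes E :: "'a::field^'n^'n"
  assumes "E ** E = E" and "trace E = 0" and char: "CHAR('a) = 0 \<or> CARD('n) < CHAR('a)"
  shows "E = 0"
proof -
  let ?d = "vec.dim (range ((*v) E))"
  have "CHAR('a) dvd ?d"
    using assms idempotent_trace_eq_rank by (metis of_nat_eq_0_iff_char_dvd)
  moreover have "?d \<le> CARD('n)"
    by (metis vec.dim_subset subset_UNIV vec_dim_card)
  ultimately have "?d = 0"
    using char by (metis dvd_0_left_iff dvd_imp_le leD neq0_conv order.strict_trans2)
  then show "E = 0" by (simp add: matrix_eq image_subset_iff)
qed

section \<open>Matrices all of whose powers have trace zero\<close>

definition powers_span :: "'a::field^'n^'n \<Rightarrow> ('a^'n^'n) set" where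
  "powers_span A = Mat.span (range (mat_pow A))"

lemma mat_pow_in_powers_span: "mat_pow A k \<in> powers_span A"
  unfolding powers_span_def by (rule Mat.span_base) simp

lemma powers_span_mult_mat_pow: "X \<in> powers_span A \<Longrightarrow> X ** mat_pow A k \<in> powers_span A"
  unfolding powers_span_def
proof (induction rule: Mat.span_induct_alt)
  case (step c x y)
  then obtain j where "x ** mat_pow A k = mat_pow A (j + k)" by (auto simp: mat_pow_add)
  then show ?case using step mat_pow_in_powers_span[of A "j + k"]
    by (simp add: powers_span_def matrix_ring_simps Mat.span_add Mat.span_scale)
qed (simp add: Mat.span_zero)

lemma powers_span_mult:
  assumes "X \<in> powers_span A"
  shows "Y \<in> powers_span A \<Longrightarrow> X ** Y \<in> powers_span A"
  unfolding powers_span_def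
proof (induction Y rule: Mat.span_induct_alt)
  case (step c x y)
  then have "X ** x \<in> powers_span A"
    using assms powers_span_mult_mat_pow by auto
  then show ?case using step
    by (simp add: powers_span_def matrix_ring_simps Mat.span_add Mat.span_scale)
qed (simp add: Mat.span_zero)

lemma powers_span_commute_mat_pow: "X \<in> powers_span A \<Longrightarrow> X ** mat_pow A k = mat_pow A k ** X"
  unfolding powers_span_def
proof (induction rule: Mat.span_induct_alt)
  case (step c x y)
  then show ?case by (auto simp: matrix_ring_simps mat_pow_commute)
qed simp

lemma powers_span_commute:
  assumes "X \<in> powers_span A"
  shows "Y \<in> powers_span A \<Longrightarrow> X ** Y = Y ** X"
  unfolding powers_span_def
proof (induction Y rule: Mat.span_induct_alt)
  case (step c x y)
  then show ?case
    using assms powers_span_commute_mat_pow by (auto simp: matrix_ring_simps)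
qed simp

lemma powers_span_mat_pow: "T \<in> powers_span A \<Longrightarrow> mat_pow T k \<in> powers_span A"
  by (induction k) (auto simp: powers_span_mult intro: mat_pow_in_powers_span[of A 0, simplified])

lemma trace_mult_powers_span:
  assumes "\<forall>m\<ge>1. trace (mat_pow A m) = 0" and "Y \<in> powers_span A"
  shows "trace (A ** Y) = 0"
  using assms(2) unfolding powers_span_def
proof (induction rule: Mat.span_induct_alt)
  case base then show ?case by (simp add: trace_def)
next
  case (step c x y)
  then obtain j where "x = mat_pow A j" by auto
  then have "trace (A ** x) = 0" using assms(1)[rule_format, of "Suc j"] by simp
  then show ?case
    using step by (simp add: matrix_ring_simps trace_add trace_mat_scale)
qed

lemma mat_pow_in_span_higher_powers:
  fixes A :: "'a::field^'n^'n"
  obtains r where "r \<ge> 1" "mat_pow A r \<in> Mat.span (mat_pow A ` {Suc r..})"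
proof -
  let ?D = "\<lambda>k. Mat.dim (mat_pow A ` {k..})"
  have "\<exists>r\<ge>1. mat_pow A r \<in> Mat.span (mat_pow A ` {Suc r..})"
  proof (rule ccontr)
    assume "\<not> ?thesis"
    then have no_power: "mat_pow A k \<notin> Mat.span (mat_pow A ` {Suc k..})" if "k \<ge> 1" for k
      using that by blast
    have decreasing: "?D (Suc k) < ?D k" if "k \<ge> 1" for k
    proof (rule Mat.dim_psubset)
      have "Mat.span (mat_pow A ` {Suc k..}) \<subseteq> Mat.span (mat_pow A ` {k..})"
        by (rule Mat.span_mono) auto
      moreover have "mat_pow A k \<in> Mat.span (mat_pow A ` {k..})"
        by (rule Mat.span_base) auto
      ultimately show "Mat.span (mat_pow A ` {Suc k..}) \<subset> Mat.span (mat_pow A ` {k..})"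
        using no_power[OF that] by blast
    qed
    have "?D (Suc m) + m \<le> ?D 1" for m
    proof (induction m)
      case (Suc m) then show ?case using decreasing[of "Suc m"] by simp
    qed simp
    moreover have "?D 1 \<le> Mat.dim (UNIV :: ('a^'n^'n) set)" by (rule Mat.dim_subset) simp
    ultimately show False
      by (metis add_leD2 not_less_eq_eq)
  qed
  then show thesis using that by blast
qed

lemma span_higher_powers_factor:
  assumes "Z \<in> Mat.span (mat_pow A ` {Suc r..})"
  obtains T where "T \<in> powers_span A" "Z = mat_pow A (Suc r) ** T"
proof -
  have "\<exists>T\<in>powers_span A. Z = mat_pow A (Suc r) ** T"
    using assms
  proof (induction rule: Mat.span_induct_alt)
    case base
    show ?case by (auto intro: bexI[of _ 0] simp: powers_span_def Mat.span_zero)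
  next
    case (step c x y)
    then obtain j T where "j \<ge> Suc r" "x = mat_pow A j" "T \<in> powers_span A"
      "y = mat_pow A (Suc r) ** T" by auto
    then have "x = mat_pow A (Suc r) ** mat_pow A (j - Suc r)"
      by (metis le_add_diff_inverse mat_pow_add)
    then have "mat_scale c x + y = mat_pow A (Suc r) ** (mat_scale c (mat_pow A (j - Suc r)) + T)"
      using \<open>y = mat_pow A (Suc r) ** T\<close> by (simp only: matrix_ring_simps)
    moreover have "mat_scale c (mat_pow A (j - Suc r)) + T \<in> powers_span A"
      using \<open>T \<in> powers_span A\<close> mat_pow_in_powers_span[of A "j - Suc r"]
      unfolding powers_span_def by (blast intro: Mat.span_add Mat.span_scale)
    ultimately show ?case by blast
  qed
  then show thesis using that by blast
qed

lemma nilpotent_if_trace_powers_zero: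
  fixes A :: "'a::field^'n^'n"
  assumes char: "CHAR('a) = 0 \<or> CARD('n) < CHAR('a)"
    and traces: "\<forall>m\<ge>1. trace (mat_pow A m) = 0"
  obtains N where "mat_pow A N = 0"
proof -
  obtain r where "r \<ge> 1" and "mat_pow A r \<in> Mat.span (mat_pow A ` {Suc r..})"
    using mat_pow_in_span_higher_powers by blast
  then obtain T where T: "T \<in> powers_span A" and fitting: "mat_pow A r = mat_pow A (Suc r) ** T"
    using span_higher_powers_factor by blast
  have iterated: "mat_pow A r = mat_pow A (r + k) ** mat_pow T k" for k
  proof (induction k)
    case (Suc k)
    have "mat_pow A (r + Suc k) = mat_pow A k ** mat_pow A (Suc r)"
      by (metis mat_pow_add add_Suc_right add.commute)
    then have "mat_pow A (r + Suc k) ** mat_pow T (Suc k)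
        = mat_pow A k ** (mat_pow A (Suc r) ** T) ** mat_pow T k"
      by (simp add: matrix_mul_assoc)
    also have "\<dots> = mat_pow A k ** mat_pow A r ** mat_pow T k"
      by (simp only: fitting[symmetric])
    also have "\<dots> = mat_pow A (r + k) ** mat_pow T k"
      by (metis mat_pow_add add.commute)
    finally show ?case using Suc by simp
  qed simp
  (* E is idempotent, absorbs A^r, and lies in A times the span of the powers of A. *)
  define E where "E = mat_pow A r ** mat_pow T r"
  have "mat_pow T r \<in> powers_span A" using T by (rule powers_span_mat_pow)
  then have commute: "mat_pow T r ** mat_pow A r = E"
    unfolding E_def by (rule powers_span_commute) (rule mat_pow_in_powers_span)
  have absorb: "mat_pow A r = mat_pow A r ** E"
    using iterated[of r] by (simp add: E_def mat_pow_add matrix_mul_assoc)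
  have "E ** E = E"
    using absorb commute by (metis E_def matrix_mul_assoc)
  moreover have "trace E = 0"
  proof -
    obtain r' where "r = Suc r'" using \<open>r \<ge> 1\<close> by (cases r) auto
    then have "E = A ** (mat_pow A r' ** mat_pow T r)" by (simp add: E_def matrix_mul_assoc)
    moreover have "mat_pow A r' ** mat_pow T r \<in> powers_span A"
      using \<open>mat_pow T r \<in> powers_span A\<close> by (rule powers_span_mult[OF mat_pow_in_powers_span])
    ultimately show ?thesis using trace_mult_powers_span[OF traces] by simp
  qed
  ultimately have "E = 0" using char by (rule idempotent_trace_zero)
  then show thesis using absorb that by simp
qed

section \<open>Mathieu subspaces of codimension one\<close>

lemma two_sided_mathieu_imp_left_mathieu: "two_sided_mathieu V \<Longrightarrow> left_mathieu V"
  unfolding two_sided_mathieu_def left_mathieu_def by (metis matrix_mul_rid)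

lemma is_mathieu_imp_left_or_right: "is_mathieu \<theta> V \<Longrightarrow> left_mathieu V \<or> right_mathieu V"
  by (cases \<theta>) (auto simp: two_sided_mathieu_imp_left_mathieu)

lemma left_mathieu_kernel_left_ideal_closed:
  assumes "left_mathieu {X. \<phi> X = 0}"
  shows "kernel_left_ideal_closed \<phi>"
  unfolding kernel_left_ideal_closed_def
proof (intro allI impI)
  fix e b
  assume idem: "e ** e = e" and "\<phi> e = 0"
  then have "\<forall>m\<ge>1. mat_pow e m \<in> {X. \<phi> X = 0}" by (simp add: mat_pow_idempotent)
  then obtain N where "\<forall>m\<ge>N. b ** mat_pow e m \<in> {X. \<phi> X = 0}"
    using assms unfolding left_mathieu_def by blast
  then have "b ** mat_pow e (Suc N) \<in> {X. \<phi> X = 0}" by (simp del: mat_pow.simps)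
  then show "\<phi> (b ** e) = 0"
    by (simp only: mat_pow_idempotent[OF idem] zero_less_Suc mem_Collect_eq)
qed

lemma right_mathieu_kernel_left_ideal_closed:
  assumes "right_mathieu {X. \<phi> X = 0}"
  shows "kernel_left_ideal_closed (\<lambda>X. \<phi> (transpose X))"
  unfolding kernel_left_ideal_closed_def
proof (intro allI impI)
  fix e b
  assume "e ** e = e" and "\<phi> (transpose e) = 0"
  then have idem: "transpose e ** transpose e = transpose e"
    by (metis matrix_transpose_mul)
  with \<open>\<phi> (transpose e) = 0\<close> have "\<forall>m\<ge>1. mat_pow (transpose e) m \<in> {X. \<phi> X = 0}"
    by (simp add: mat_pow_idempotent)
  then obtain N where "\<forall>m\<ge>N. mat_pow (transpose e) m ** transpose b \<in> {X. \<phi> X = 0}"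
    using assms unfolding right_mathieu_def by blast
  then have "mat_pow (transpose e) (Suc N) ** transpose b \<in> {X. \<phi> X = 0}"
    by (simp del: mat_pow.simps)
  then show "\<phi> (transpose (b ** e)) = 0"
    by (simp only: mat_pow_idempotent[OF idem] zero_less_Suc mem_Collect_eq matrix_transpose_mul)
qed

lemma mathieu_if_powers_nilpotent:
  assumes "ksubspace V" and nil: "\<And>a. \<forall>m\<ge>1. mat_pow a m \<in> V \<Longrightarrow> \<exists>N. mat_pow a N = 0"
  shows "is_mathieu \<theta> V"
proof -
  have "0 \<in> V" using assms(1) by (simp add: ksubspace_def Mat.subspace_0)
  have eventually_zero: "\<exists>N. \<forall>m\<ge>N. mat_pow a m = 0" if "\<forall>m\<ge>1. mat_pow a m \<in> V" for a
    using nil[OF that] mat_pow_zero_mono by blast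
  have "left_mathieu V" "right_mathieu V" "two_sided_mathieu V"
    using assms(1) \<open>0 \<in> V\<close> eventually_zero
    unfolding left_mathieu_def right_mathieu_def two_sided_mathieu_def
    by (fastforce simp: times0_left times0_right)+
  then show ?thesis by (cases \<theta>) simp_all
qed

lemma codim_one_trace_kernel: "codim_one {A :: 'a::field^'n^'n. trace A = 0}"
proof -
  have "trace (matrix_unit k k :: 'a^'n^'n) \<noteq> 0" by (simp add: trace_matrix_unit)
  then show ?thesis unfolding codim_one_iff_kernel using linear_form_trace by blast
qed

lemma trace_kernel_is_mathieu:
  assumes "CHAR('a) = 0 \<or> CARD('n) < CHAR('a)"
  shows "is_mathieu \<theta> {A :: 'a::field^'n^'n. trace A = 0}"
proof (rule mathieu_if_powers_nilpotent)
  show "ksubspace {A :: 'a^'n^'n. trace A = 0}"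
    using codim_one_trace_kernel unfolding codim_one_def by blast
  show "\<exists>N. mat_pow a N = 0" if "\<forall>m\<ge>1. mat_pow a m \<in> {A :: 'a^'n^'n. trace A = 0}" for a
    using nilpotent_if_trace_powers_zero[OF assms, of a] that by auto
qed

lemma mathieu_codim_one_eq_trace_kernel:
  fixes V :: "('a::field^'n^'n) set"
  assumes "is_mathieu \<theta> V" and "codim_one V"
  shows "V = {A. trace A = 0}" and "kernel_left_ideal_closed (trace :: 'a^'n^'n \<Rightarrow> 'a)"
proof -
  fix k :: 'n
  obtain \<phi> X0 where lin: "linear_form \<phi>" and "\<phi> X0 \<noteq> 0" and V: "V = {X. \<phi> X = 0}"
    using assms(2) by (auto simp: codim_one_iff_kernel)
  obtain \<psi> where "linear_form \<psi>" and closed: "kernel_left_ideal_closed \<psi>"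
    and \<psi>: "\<psi> = \<phi> \<or> \<psi> = (\<lambda>X. \<phi> (transpose X))"
    using is_mathieu_imp_left_or_right[OF assms(1)] lin linear_form_transpose
      left_mathieu_kernel_left_ideal_closed right_mathieu_kernel_left_ideal_closed
    unfolding V by blast
  define c where "c = \<psi> (matrix_unit k k)"
  have \<psi>_trace: "\<psi> = (\<lambda>X. c * trace X)"
    unfolding c_def using \<open>linear_form \<psi>\<close> closed by (rule kernel_left_ideal_closed_scaled_trace)
  with \<psi> have "\<phi> = (\<lambda>X. c * trace X)"
    by (metis trace_transpose transpose_transpose)
  moreover from this have "c \<noteq> 0" using \<open>\<phi> X0 \<noteq> 0\<close> by auto
  ultimately show "V = {A. trace A = 0}" using V by auto
  show "kernel_left_ideal_closed (trace :: 'a^'n^'n \<Rightarrow> 'a)"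
    using closed \<open>c \<noteq> 0\<close> by (simp add: \<psi>_trace kernel_left_ideal_closed_def)
qed

theorem theorem5p1:
  fixes \<theta> :: mathieu_type
  defines "H \<equiv> {A :: 'a::field^'n^'n. trace A = 0}"
  shows "((CHAR('a) = 0 \<or> CARD('n) < CHAR('a)) \<longrightarrow>
           (is_mathieu \<theta> H \<and> codim_one H \<and>
            (\<forall>V :: ('a^'n^'n) set. is_mathieu \<theta> V \<and> codim_one V \<longrightarrow> V = H))) \<and>
         ((0 < CHAR('a) \<and> CHAR('a) \<le> CARD('n)) \<longrightarrow>
           \<not> (\<exists>V :: ('a^'n^'n) set. is_mathieu \<theta> V \<and> codim_one V))"
  unfolding H_def
  using trace_kernel_is_mathieu codim_one_trace_kernel mathieu_codim_one_eq_trace_kernel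
    trace_kernel_not_left_ideal_closed
  by blast

end
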